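(* Let $H$ be a GCDs-monoid. Then for every $a\in H$ there exist $b\in H$ and $c\in\mathrm{Sqf}\,H$ such that $a=bc$ and, for every $d\in\mathrm{Sqf}\,H$, if $d\mid a$ then $d\mid c$.
   Context: A monoid means a commutative cancellative monoid (written multiplicatively); $H^{\ast}$ is its unit group. $\mathrm{Sqf}\,H$ is the set of elements of $H$ not of the form $b^2c$ with $b,c\in H$, $b\notin H^{\ast}$. $H$ is a GCDs-monoid if every subset of $H$ has a greatest common divisor in $H$. *)

theory Defs
  imports Main
begin

text \<open>A monoid is a commutative cancellative monoid, written multiplicatively.
  We take the whole type as the monoid H.\<close>

definition cancellative :: "'a::comm_monoid_mult itself \<Rightarrow> bool" where
  "cancellative _ \<longleftrightarrow> (\<forall>a b c :: 'a. a * b = a * c \<longrightarrow> b = c)"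

definition unit_elem :: "'a::comm_monoid_mult \<Rightarrow> bool" where
  "unit_elem u \<longleftrightarrow> (\<exists>v. u * v = 1)"

definition Sqf :: "'a::comm_monoid_mult set" where
  "Sqf = {a. \<not> (\<exists>b c. a = b\<^sup>2 * c \<and> \<not> unit_elem b)}"

definition is_gcd_of :: "'a::comm_monoid_mult \<Rightarrow> 'a set \<Rightarrow> bool" where
  "is_gcd_of d X \<longleftrightarrow> (\<forall>x\<in>X. d dvd x) \<and> (\<forall>e. (\<forall>x\<in>X. e dvd x) \<longrightarrow> e dvd d)"

definition GCDs_monoid :: "'a::comm_monoid_mult itself \<Rightarrow> bool" where
  "GCDs_monoid T \<longleftrightarrow> cancellative T \<and> (\<forall>X :: 'a set. \<exists>d. is_gcd_of d X)"

end

theory Submission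
  imports Defs
begin

text \<open>Take for c an lcm of the squarefree divisors of a, namely the gcd of their common
  multiples; it divides a and is divided by every squarefree divisor of a. It is itself squarefree:
  if c = \<beta>^2 e, then every squarefree divisor s of c already divides \<beta> e. Indeed, with
  g = gcd(s, \<beta> e) and s = g u, the cofactor u is coprime to (\<beta> e)/g and divides \<beta> times it,
  so u divides \<beta> by Euclid's lemma; then u divides g, u^2 divides s, and u is a unit. Hence
  c divides \<beta> e, and cancelling \<beta> e from \<beta>^2 e dvd \<beta> e shows that \<beta> is a unit.\<close>

lemma cancellative_cancel_left:
  fixes x y z :: "'a::comm_monoid_mult"
  assumes "cancellative TYPE('a)" and "x * y = x * z"
  shows "y = z"
  using assms unfolding cancellative_def by blast

lemma cancellative_dvd_cancel_left:
  fixes x y z :: "'a::comm_monoid_mult"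
  assumes canc: "cancellative TYPE('a)" and "x * y dvd x * z"
  shows "y dvd z"
proof -
  from assms(2) obtain m where "x * z = x * (y * m)" by (auto simp: dvd_def mult.assoc)
  then have "z = y * m" by (rule cancellative_cancel_left[OF canc])
  then show ?thesis by simp
qed

lemma unit_elem_iff_dvd_one: "unit_elem u \<longleftrightarrow> u dvd 1"
  unfolding unit_elem_def dvd_def by (metis mult.commute)

lemma dvd_mult_unit_elem:
  assumes "unit_elem k" and "a dvd b * k"
  shows "a dvd b"
proof -
  have "b * k dvd b * 1"
    using assms(1) unfolding unit_elem_iff_dvd_one by (intro mult_dvd_mono dvd_refl)
  with assms(2) show ?thesis by (simp add: dvd_trans)
qed

lemma gcd_coprime_cofactors:
  fixes x y :: "'a::comm_monoid_mult"
  assumes canc: "cancellative TYPE('a)" and g: "is_gcd_of g {x, y}"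
    and "x = g * u" "y = g * v" "k dvd u" "k dvd v"
  shows "unit_elem k"
proof -
  have "g * k dvd x" "g * k dvd y" using assms(3-6) by (auto intro: mult_dvd_mono)
  then have "g * k dvd g * 1" using g unfolding is_gcd_of_def by auto
  then show ?thesis
    unfolding unit_elem_iff_dvd_one by (rule cancellative_dvd_cancel_left[OF canc])
qed

lemma coprime_dvd_mult_cancel:
  fixes u b v :: "'a::comm_monoid_mult"
  assumes canc: "cancellative TYPE('a)" and gcd2: "\<And>x y :: 'a. \<exists>d. is_gcd_of d {x, y}"
    and "u dvd b * v" and coprime: "\<And>k. k dvd u \<Longrightarrow> k dvd v \<Longrightarrow> unit_elem k"
  shows "u dvd b"
proof -
  obtain D where D: "is_gcd_of D {b * u, b * v}" using gcd2 by blast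
  have "b dvd D" using D unfolding is_gcd_of_def by auto
  then obtain k where Dk: "D = b * k" by (auto simp: dvd_def)
  have "b * k dvd b * u" "b * k dvd b * v" using D Dk unfolding is_gcd_of_def by auto
  then have "unit_elem k" using coprime cancellative_dvd_cancel_left[OF canc] by blast
  moreover have "u dvd b * k" using D Dk \<open>u dvd b * v\<close> unfolding is_gcd_of_def by auto
  ultimately show ?thesis by (rule dvd_mult_unit_elem)
qed

lemma Sqf_dvd_square_mult:
  fixes s b e :: "'a::comm_monoid_mult"
  assumes canc: "cancellative TYPE('a)" and gcd2: "\<And>x y :: 'a. \<exists>d. is_gcd_of d {x, y}"
    and "s \<in> Sqf" and "s dvd b\<^sup>2 * e"
  shows "s dvd b * e"
proof -
  obtain g where g: "is_gcd_of g {s, b * e}" using gcd2 by blast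
  then have "g dvd s" "g dvd b * e" unfolding is_gcd_of_def by auto
  then obtain u v where su: "s = g * u" and bv: "b * e = g * v" by (auto simp: dvd_def)
  have "g * u dvd g * (b * v)" using \<open>s dvd b\<^sup>2 * e\<close> su bv
    by (simp add: power2_eq_square ac_simps)
  then have "u dvd b * v" by (rule cancellative_dvd_cancel_left[OF canc])
  then have "u dvd b" using coprime_dvd_mult_cancel[OF canc gcd2]
      gcd_coprime_cofactors[OF canc g su bv] by blast
  then have "u dvd s" "u dvd b * e" using su by simp_all
  then have "u dvd g" using g unfolding is_gcd_of_def by auto
  then obtain w where "g = u * w" by (auto simp: dvd_def)
  then have "s = u\<^sup>2 * w" using su by (simp add: power2_eq_square ac_simps)
  then have "unit_elem u" using \<open>s \<in> Sqf\<close> unfolding Sqf_def by blast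
  then have "s dvd g" using su by (auto intro: dvd_mult_unit_elem)
  then show ?thesis using \<open>g dvd b * e\<close> by (rule dvd_trans)
qed

definition common_multiples :: "'a::comm_monoid_mult set \<Rightarrow> 'a set" where
  "common_multiples S = {m. \<forall>s\<in>S. s dvd m}"

lemma dvd_gcd_common_multiples:
  assumes "is_gcd_of c (common_multiples S)" and "s \<in> S"
  shows "s dvd c"
  using assms unfolding is_gcd_of_def common_multiples_def by auto

lemma gcd_common_multiples_in_Sqf:
  fixes c :: "'a::comm_monoid_mult"
  assumes canc: "cancellative TYPE('a)" and gcd2: "\<And>x y :: 'a. \<exists>d. is_gcd_of d {x, y}"
    and "S \<subseteq> Sqf" and c: "is_gcd_of c (common_multiples S)"
  shows "c \<in> Sqf"
proof (rule ccontr)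
  assume "c \<notin> Sqf"
  then obtain \<beta> e where ce: "c = \<beta>\<^sup>2 * e" and "\<not> unit_elem \<beta>"
    unfolding Sqf_def by auto
  have "\<beta> * e \<in> common_multiples S"
    unfolding common_multiples_def
  proof (intro CollectI ballI)
    fix s assume "s \<in> S"
    then have "s dvd \<beta>\<^sup>2 * e" using c ce by (metis dvd_gcd_common_multiples)
    then show "s dvd \<beta> * e"
      using \<open>s \<in> S\<close> \<open>S \<subseteq> Sqf\<close> Sqf_dvd_square_mult[OF canc gcd2] by blast
  qed
  then have "(\<beta> * e) * \<beta> dvd (\<beta> * e) * 1"
    using c ce unfolding is_gcd_of_def by (simp add: power2_eq_square ac_simps)
  then have "unit_elem \<beta>"
    unfolding unit_elem_iff_dvd_one by (rule cancellative_dvd_cancel_left[OF canc])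
  with \<open>\<not> unit_elem \<beta>\<close> show False ..
qed

theorem proposition4p5:
  fixes a :: "'a::comm_monoid_mult"
  assumes "GCDs_monoid TYPE('a)"
  shows "\<exists>b c. c \<in> Sqf \<and> a = b * c \<and> (\<forall>d\<in>Sqf. d dvd a \<longrightarrow> d dvd c)"
proof -
  have canc: "cancellative TYPE('a)" and gcds: "\<And>X :: 'a set. \<exists>d. is_gcd_of d X"
    using assms unfolding GCDs_monoid_def by auto
  define S where "S = {s \<in> Sqf. s dvd a}"
  obtain c where c: "is_gcd_of c (common_multiples S)" using gcds by blast
  have "c \<in> Sqf" by (rule gcd_common_multiples_in_Sqf[OF canc gcds _ c]) (auto simp: S_def)
  moreover have "a \<in> common_multiples S" by (simp add: S_def common_multiples_def)
  then have "c dvd a" using c unfolding is_gcd_of_def by blast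
  then obtain b where "a = b * c" by (metis dvd_def mult.commute)
  moreover have "\<forall>d\<in>Sqf. d dvd a \<longrightarrow> d dvd c"
    using c dvd_gcd_common_multiples by (auto simp: S_def)
  ultimately show ?thesis by blast
qed

end
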